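(* Let $A, B, K, L, F \in \mathbb{R}^{n\times n}$ with $B$ and $L$ non-singular, and suppose $$\sigma_{\min}(KL^{-1})\,\sigma_{\min}(B^{-1}A) > 1.$$ Then the Sylvester-like absolute value equation $$AXK + B\lvert X\rvert L = F$$ has exactly one solution $X \in \mathbb{R}^{n\times n}$.
   Context: $\sigma_{\min}(\cdot)$ is the smallest singular value and $\lvert X\rvert$ the entrywise absolute value of a matrix $X$. *)

theory Defs
  imports "HOL-Analysis.Analysis"
begin

definition mat_abs :: "real^'n^'m \<Rightarrow> real^'n^'m" where
  "mat_abs X = (\<chi> i j. \<bar>X $ i $ j\<bar>)"

definition real_eigenvalues :: "real^'n^'n \<Rightarrow> real set" where
  "real_eigenvalues M = {c. \<exists>v. v \<noteq> 0 \<and> M *v v = c *\<^sub>R v}"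

definition sigma_min :: "real^'n^'n \<Rightarrow> real" where
  "sigma_min M = sqrt (Min (real_eigenvalues (transpose M ** M)))"

end

(*
  Normalize by B and L: with M = B^-1 A and N = K L^-1 the equation becomes
  M X N + |X| = G, i.e. X is a fixed point of T X = M^-1 (G - |X|) N^-1.
  In the Frobenius norm ||M Z N|| >= sigma_min M * sigma_min N * ||Z||
  (M stretches the columns of Z by at least sigma_min M, N^T the rows by at
  least sigma_min N), and X |-> |X| is 1-Lipschitz, so T is a contraction with
  constant 1 / (sigma_min M * sigma_min N) < 1 and Banach's fixed point theorem
  gives exactly one solution.  The singular value bounds come from the
  variational characterization of the smallest eigenvalue of the symmetric
  Gram matrix M^T M: the minimum of the Rayleigh quotient over the unit sphere
  is attained at an eigenvector.
*)
theory Submission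
  imports Defs
begin

lemma matrix_inv_right:
  fixes A :: "'a::semiring_1^'n^'m"
  assumes "invertible A"
  shows "A ** matrix_inv A = mat 1"
  using someI_ex[OF assms[unfolded invertible_def]] unfolding matrix_inv_def by blast

lemma matrix_inv_left:
  fixes A :: "'a::semiring_1^'n^'m"
  assumes "invertible A"
  shows "matrix_inv A ** A = mat 1"
  using someI_ex[OF assms[unfolded invertible_def]] unfolding matrix_inv_def by blast

lemma invertible_matrix_inv:
  fixes A :: "'a::semiring_1^'n^'m"
  assumes "invertible A"
  shows "invertible (matrix_inv A)"
  unfolding invertible_def using matrix_inv_left[OF assms] matrix_inv_right[OF assms] by (intro exI[of _ A]) simp

lemma matrix_inv_sandwich_cancel:
  fixes P :: "'a::semiring_1^'n^'n" and Q :: "'a^'m^'m"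
  assumes "invertible P" "invertible Q"
  shows "matrix_inv P ** (P ** Y ** Q) ** matrix_inv Q = Y"
proof -
  have "matrix_inv P ** (P ** Y ** Q) ** matrix_inv Q = (matrix_inv P ** P) ** Y ** (Q ** matrix_inv Q)"
    by (simp add: matrix_mul_assoc)
  then show ?thesis by (simp add: matrix_inv_left[OF assms(1)] matrix_inv_right[OF assms(2)])
qed

lemma matrix_sandwich_eq_iff:
  fixes P :: "'a::semiring_1^'n^'n" and Q :: "'a^'m^'m"
  assumes "invertible P" "invertible Q"
  shows "P ** U ** Q = P ** V ** Q \<longleftrightarrow> U = V"
  by (metis matrix_inv_sandwich_cancel[OF assms])

lemma matrix_add_rdistrib: "(A + B) ** C = A ** C + B ** C"
  by (simp add: matrix_matrix_mult_def vec_eq_iff sum.distrib algebra_simps)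

lemma matrix_diff_ldistrib:
  fixes A :: "'a::ring_1^'n^'m"
  shows "A ** (B - C) = A ** B - A ** C"
  by (simp add: matrix_matrix_mult_def vec_eq_iff sum_subtractf algebra_simps)

lemma matrix_diff_rdistrib:
  fixes A :: "'a::ring_1^'n^'m"
  shows "(A - B) ** C = A ** C - B ** C"
  by (simp add: matrix_matrix_mult_def vec_eq_iff sum_subtractf algebra_simps)

lemma matrix_sandwich_inv_cancel:
  fixes P :: "'a::semiring_1^'n^'n" and Q :: "'a^'m^'m"
  assumes "invertible P" "invertible Q"
  shows "P ** (matrix_inv P ** Y ** matrix_inv Q) ** Q = Y"
proof -
  have "P ** (matrix_inv P ** Y ** matrix_inv Q) ** Q = (P ** matrix_inv P) ** Y ** (matrix_inv Q ** Q)"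
    by (simp add: matrix_mul_assoc)
  then show ?thesis by (simp add: matrix_inv_right[OF assms(1)] matrix_inv_left[OF assms(2)])
qed

lemma norm_transpose: "norm (transpose (X :: real^'n^'m)) = norm X"
proof -
  have "transpose X \<bullet> transpose X = X \<bullet> X"
    unfolding inner_vec_def transpose_def by (simp, subst sum.swap, simp)
  thus ?thesis by (simp add: norm_eq_sqrt_inner)
qed

lemma row_matrix_mult:
  fixes Z :: "'a::comm_semiring_1^'n^'m"
  shows "(Z ** N) $ i = transpose N *v (Z $ i)"
  by (simp add: matrix_matrix_mult_def matrix_vector_mult_def transpose_def vec_eq_iff mult.commute)

lemma norm_matrix_mult_right_ge:
  fixes Z :: "real^'n^'m" and N :: "real^'k^'n"
  assumes "0 \<le> c" "\<And>y. c * norm y \<le> norm (transpose N *v y)"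
  shows "c * norm Z \<le> norm (Z ** N)"
proof -
  have "norm (c *\<^sub>R Z) \<le> norm (Z ** N)"
    by (rule norm_le_componentwise_cart)
      (use assms in \<open>simp add: row_matrix_mult del: transpose_matrix_vector\<close>)
  thus ?thesis using assms(1) by simp
qed

lemma norm_matrix_mult_left_ge:
  fixes M :: "real^'n^'m" and Y :: "real^'k^'n"
  assumes "0 \<le> c" "\<And>y. c * norm y \<le> norm (M *v y)"
  shows "c * norm Y \<le> norm (M ** Y)"
  using norm_matrix_mult_right_ge[of c "transpose M" "transpose Y"] assms
  by (simp add: norm_transpose flip: matrix_transpose_mul)

lemma norm_mat_abs_diff_le: "norm (mat_abs X - mat_abs Y) \<le> norm (X - Y)"
  by (intro norm_le_componentwise_cart) (simp add: mat_abs_def)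

lemma inner_transpose_matrix_vector:
  fixes S :: "real^'n^'m"
  shows "x \<bullet> (transpose S *v y) = (S *v x) \<bullet> y"
  using dot_lmul_matrix[of y S x] by (simp add: inner_commute)

lemma nonneg_quadratic_imp_linear_coeff_eq_0:
  fixes a c :: real
  assumes "\<And>t. 0 \<le> t * a + t\<^sup>2 * c"
  shows "a = 0"
proof (rule ccontr)
  assume "a \<noteq> 0"
  define d where "d = \<bar>c\<bar> + 1"
  have d: "d > 0" "c - d < 0" unfolding d_def by auto
  define t where "t = - a / d"
  have "t * a + t\<^sup>2 * c = a\<^sup>2 / d\<^sup>2 * (c - d)"
    unfolding t_def using d by (simp add: field_simps power2_eq_square)
  also have "\<dots> < 0" using \<open>a \<noteq> 0\<close> d by (intro mult_pos_neg) auto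
  finally show False using assms[of t] by simp
qed

lemma rayleigh_quotient_attains_min:
  fixes S :: "real^'n^'n"
  shows "\<exists>u. u \<bullet> u = 1 \<and> (\<forall>x. (u \<bullet> (S *v u)) * (x \<bullet> x) \<le> x \<bullet> (S *v x))"
proof -
  define q where "q x = x \<bullet> (S *v x)" for x :: "real^'n"
  have q_scaleR: "q (c *\<^sub>R x) = c\<^sup>2 * q x" for c x
    by (simp add: q_def matrix_vector_mult_scaleR power2_eq_square)
  have cont: "continuous_on (sphere (0::real^'n) 1) q"
    unfolding q_def by (intro continuous_intros linear_continuous_on matrix_vector_mul_bounded_linear)
  then obtain u where u: "u \<in> sphere 0 1" "\<And>y. y \<in> sphere 0 1 \<Longrightarrow> q u \<le> q y"
    using continuous_attains_inf[OF compact_sphere _ cont] by auto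
  have "q u * (x \<bullet> x) \<le> q x" for x
  proof (cases "x = 0")
    case False
    have "q u \<le> q ((1 / norm x) *\<^sub>R x)" using u(2) False by simp
    then have "q u * (norm x)\<^sup>2 \<le> q x"
      using False by (simp add: q_scaleR power_divide field_simps)
    thus ?thesis by (simp add: power2_norm_eq_inner)
  qed (simp add: q_def)
  moreover have "u \<bullet> u = 1" using u(1) by (simp add: dot_square_norm)
  ultimately show ?thesis unfolding q_def by blast
qed

lemma rayleigh_minimizer_eigenvector:
  fixes S :: "real^'n^'n"
  assumes sym: "transpose S = S" and u: "u \<bullet> u = 1"
    and min: "\<And>x. (u \<bullet> (S *v u)) * (x \<bullet> x) \<le> x \<bullet> (S *v x)"
  shows "S *v u = (u \<bullet> (S *v u)) *\<^sub>R u"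
proof -
  define l where "l = u \<bullet> (S *v u)"
  define w where "w = S *v u - l *\<^sub>R u"
  have Sw: "u \<bullet> (S *v w) = w \<bullet> (S *v u)"
    using inner_transpose_matrix_vector[of u S w] sym by (simp add: inner_commute)
  have uw: "u \<bullet> w = 0" "w \<bullet> u = 0"
    using u by (simp_all add: w_def l_def inner_diff_right inner_diff_left inner_commute)
  have wSu: "w \<bullet> (S *v u) = w \<bullet> w"
    using uw by (simp add: w_def inner_diff_right inner_diff_left)
  \<comment> \<open>minimality of the Rayleigh quotient at u, tested along u + t w with w orthogonal to u\<close>
  have "0 \<le> t * (2 * (w \<bullet> w)) + t\<^sup>2 * (w \<bullet> (S *v w) - l * (w \<bullet> w))" for t
  proof -
    have "l * ((u + t *\<^sub>R w) \<bullet> (u + t *\<^sub>R w)) \<le> (u + t *\<^sub>R w) \<bullet> (S *v (u + t *\<^sub>R w))"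
      using min unfolding l_def .
    moreover have "(u + t *\<^sub>R w) \<bullet> (S *v (u + t *\<^sub>R w)) = l + 2 * t * (w \<bullet> w) + t\<^sup>2 * (w \<bullet> (S *v w))"
      by (simp add: l_def inner_add_left inner_add_right matrix_vector_right_distrib
          matrix_vector_mult_scaleR Sw wSu power2_eq_square algebra_simps)
    moreover have "(u + t *\<^sub>R w) \<bullet> (u + t *\<^sub>R w) = 1 + t\<^sup>2 * (w \<bullet> w)"
      using u uw by (simp add: inner_add_left inner_add_right power2_eq_square)
    ultimately have "l * (1 + t\<^sup>2 * (w \<bullet> w)) \<le> l + 2 * t * (w \<bullet> w) + t\<^sup>2 * (w \<bullet> (S *v w))"
      by (simp only:)
    then show ?thesis by (simp add: algebra_simps)
  qed
  then have "2 * (w \<bullet> w) = 0" by (rule nonneg_quadratic_imp_linear_coeff_eq_0)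
  then show ?thesis by (simp add: w_def l_def)
qed

lemma finite_real_eigenvalues_symmetric:
  fixes S :: "real^'n^'n"
  assumes sym: "transpose S = S"
  shows "finite (real_eigenvalues S)"
proof -
  define E where "E = real_eigenvalues S"
  define ev where "ev c = (SOME v. v \<noteq> 0 \<and> S *v v = c *\<^sub>R v)" for c
  have ev: "ev c \<noteq> 0" "S *v ev c = c *\<^sub>R ev c" if "c \<in> E" for c
    using someI_ex[of "\<lambda>v. v \<noteq> 0 \<and> S *v v = c *\<^sub>R v"] that
    unfolding E_def real_eigenvalues_def ev_def by auto
  have inj: "inj_on ev E"
  proof (rule inj_onI)
    fix c d assume cd: "c \<in> E" "d \<in> E" "ev c = ev d"
    then have "c *\<^sub>R ev c = d *\<^sub>R ev c" using ev by metis
    then show "c = d" using ev(1)[OF cd(1)] by simp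
  qed
  have "pairwise orthogonal (ev ` E)"
  proof (clarsimp simp: pairwise_def orthogonal_def)
    fix c d assume cd: "c \<in> E" "d \<in> E" "ev c \<noteq> ev d"
    have "c * (ev c \<bullet> ev d) = (S *v ev c) \<bullet> ev d" using ev(2)[OF cd(1)] by simp
    also have "\<dots> = ev c \<bullet> (S *v ev d)" using inner_transpose_matrix_vector[of "ev c" S] sym by simp
    also have "\<dots> = d * (ev c \<bullet> ev d)" using ev(2)[OF cd(2)] by simp
    finally show "ev c \<bullet> ev d = 0" using cd by auto
  qed
  moreover have "0 \<notin> ev ` E" using ev(1) by auto
  ultimately have "independent (ev ` E)" by (rule pairwise_orthogonal_independent)
  then have "finite (ev ` E)" using independent_bound by blast
  then show ?thesis using finite_imageD[OF _ inj] E_def by simp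
qed

lemma Min_real_eigenvalues_symmetric:
  fixes S :: "real^'n^'n"
  assumes sym: "transpose S = S"
  shows "Min (real_eigenvalues S) \<in> real_eigenvalues S"
    and "Min (real_eigenvalues S) * (x \<bullet> x) \<le> x \<bullet> (S *v x)"
proof -
  obtain u where u: "u \<bullet> u = 1" "\<And>x. (u \<bullet> (S *v u)) * (x \<bullet> x) \<le> x \<bullet> (S *v x)"
    using rayleigh_quotient_attains_min by blast
  define l where "l = u \<bullet> (S *v u)"
  have "S *v u = l *\<^sub>R u" unfolding l_def by (rule rayleigh_minimizer_eigenvector[OF sym u])
  moreover have "u \<noteq> 0" using u(1) by auto
  ultimately have l: "l \<in> real_eigenvalues S" unfolding real_eigenvalues_def by auto
  have "Min (real_eigenvalues S) = l"
  proof (rule Min_eqI[OF finite_real_eigenvalues_symmetric[OF sym] _ l])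
    fix c assume "c \<in> real_eigenvalues S"
    then obtain v where "v \<noteq> 0" "S *v v = c *\<^sub>R v" unfolding real_eigenvalues_def by auto
    then show "l \<le> c" using u(2)[of v] by (simp add: l_def)
  qed
  then show "Min (real_eigenvalues S) \<in> real_eigenvalues S"
    and "Min (real_eigenvalues S) * (x \<bullet> x) \<le> x \<bullet> (S *v x)"
    using l u(2) by (simp_all add: l_def)
qed

lemma inner_gram_matrix:
  fixes M :: "real^'n^'m"
  shows "x \<bullet> ((transpose M ** M) *v x) = (M *v x) \<bullet> (M *v x)"
  unfolding matrix_vector_mul_assoc[symmetric] by (rule inner_transpose_matrix_vector)

lemma Min_real_eigenvalues_gram:
  fixes M :: "real^'n^'n"
  defines "l \<equiv> Min (real_eigenvalues (transpose M ** M))"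
  shows "0 \<le> l" and "l * (x \<bullet> x) \<le> (M *v x) \<bullet> (M *v x)"
proof -
  have sym: "transpose (transpose M ** M) = transpose M ** M"
    by (simp add: matrix_transpose_mul)
  obtain v where "v \<noteq> 0" "(transpose M ** M) *v v = l *\<^sub>R v"
    using Min_real_eigenvalues_symmetric(1)[OF sym] unfolding l_def real_eigenvalues_def by blast
  then have "0 \<le> l * (v \<bullet> v)" and "0 < v \<bullet> v"
    using inner_gram_matrix[of v M] by simp_all
  then show "0 \<le> l" using mult_neg_pos[of l "v \<bullet> v"] by linarith
  show "l * (x \<bullet> x) \<le> (M *v x) \<bullet> (M *v x)"
    using Min_real_eigenvalues_symmetric(2)[OF sym, of x] unfolding l_def inner_gram_matrix .
qed

lemma sigma_min_nonneg: "0 \<le> sigma_min M"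
  by (simp add: sigma_min_def Min_real_eigenvalues_gram(1))

lemma power2_sigma_min: "(sigma_min M)\<^sup>2 = Min (real_eigenvalues (transpose M ** M))"
  by (simp add: sigma_min_def Min_real_eigenvalues_gram(1))

lemma sigma_min_le_norm_matrix_vector: "sigma_min M * norm x \<le> norm (M *v x)"
proof (rule power2_le_imp_le)
  have "(sigma_min M * norm x)\<^sup>2 = Min (real_eigenvalues (transpose M ** M)) * (x \<bullet> x)"
    unfolding power_mult_distrib power2_sigma_min power2_norm_eq_inner ..
  also have "\<dots> \<le> (norm (M *v x))\<^sup>2"
    unfolding power2_norm_eq_inner by (rule Min_real_eigenvalues_gram(2))
  finally show "(sigma_min M * norm x)\<^sup>2 \<le> (norm (M *v x))\<^sup>2" .
qed simp

lemma invertible_if_sigma_min_pos: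
  fixes M :: "real^'n^'n"
  assumes "0 < sigma_min M"
  shows "invertible M"
proof -
  have "inj ((*v) M)"
  proof (rule injI)
    fix x y assume "M *v x = M *v y"
    then have "sigma_min M * norm (x - y) \<le> 0"
      using sigma_min_le_norm_matrix_vector[of M "x - y"] by (simp add: matrix_vector_mult_diff_distrib)
    then show "x = y" using assms by (simp add: mult_le_0_iff)
  qed
  then show ?thesis by (simp add: invertible_left_inverse matrix_left_invertible_injective)
qed

lemma inner_self_ge_if_rayleigh_ge:
  fixes x v :: "'a::real_inner"
  assumes "0 \<le> l" "l * (x \<bullet> x) \<le> x \<bullet> v"
  shows "l * (x \<bullet> v) \<le> v \<bullet> v"
proof -
  have "v \<bullet> v - l * (x \<bullet> v) = (v - l *\<^sub>R x) \<bullet> (v - l *\<^sub>R x) + l * (x \<bullet> v - l * (x \<bullet> x))"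
    by (simp add: inner_diff_left inner_diff_right inner_commute algebra_simps)
  moreover have "0 \<le> l * (x \<bullet> v - l * (x \<bullet> x))" using assms by simp
  ultimately show ?thesis by (smt (verit) inner_ge_zero)
qed

lemma sigma_min_le_norm_transpose_matrix_vector:
  fixes N :: "real^'n^'n"
  shows "sigma_min N * norm y \<le> norm (transpose N *v y)"
proof (cases "0 < sigma_min N")
  case True
  then have inv: "invertible N" by (rule invertible_if_sigma_min_pos)
  \<comment> \<open>write y = N x, so that transpose N y is the Gram matrix applied to x\<close>
  define x where "x = matrix_inv N *v y"
  have y: "y = N *v x" by (simp add: x_def matrix_vector_mul_assoc matrix_inv_right[OF inv])
  define v where "v = (transpose N ** N) *v x"
  have v: "v = transpose N *v y" by (simp add: v_def y matrix_vector_mul_assoc)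
  have xv: "x \<bullet> v = y \<bullet> y" by (simp add: v_def y inner_gram_matrix)
  have "(sigma_min N)\<^sup>2 * (x \<bullet> x) \<le> x \<bullet> v"
    using Min_real_eigenvalues_gram(2)[of N x] by (simp add: power2_sigma_min xv y)
  then have "(sigma_min N)\<^sup>2 * (x \<bullet> v) \<le> v \<bullet> v" by (rule inner_self_ge_if_rayleigh_ge[rotated]) simp
  then have "(sigma_min N * norm y)\<^sup>2 \<le> (norm v)\<^sup>2"
    by (simp add: xv power_mult_distrib power2_norm_eq_inner)
  then show ?thesis unfolding v by (rule power2_le_imp_le) simp
next
  case False
  then show ?thesis using sigma_min_nonneg[of N] by simp
qed

lemma sigma_min_mult_le_norm_matrix_sandwich:
  fixes M N Z :: "real^'n^'n"
  shows "sigma_min M * sigma_min N * norm Z \<le> norm (M ** Z ** N)"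
proof -
  have "sigma_min M * (sigma_min N * norm Z) \<le> sigma_min M * norm (Z ** N)"
    by (intro mult_left_mono norm_matrix_mult_right_ge sigma_min_nonneg
        sigma_min_le_norm_transpose_matrix_vector)
  also have "\<dots> \<le> norm (M ** (Z ** N))"
    by (intro norm_matrix_mult_left_ge sigma_min_nonneg sigma_min_le_norm_matrix_vector)
  finally show ?thesis by (simp add: matrix_mul_assoc mult.assoc)
qed

lemma normalized_sylvester_ave_unique_solution:
  fixes M N G :: "real^'n^'n"
  assumes "1 < sigma_min M * sigma_min N"
  shows "\<exists>!X. M ** X ** N + mat_abs X = G"
proof -
  define s where "s = sigma_min M * sigma_min N"
  have "0 < sigma_min M" "0 < sigma_min N"
    using assms sigma_min_nonneg[of M] sigma_min_nonneg[of N]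
    by (auto simp: zero_less_mult_iff less_le)
  then have inv: "invertible M" "invertible N" by (simp_all add: invertible_if_sigma_min_pos)
  define T where "T X = matrix_inv M ** (G - mat_abs X) ** matrix_inv N" for X
  have fixpoint_iff: "M ** X ** N + mat_abs X = G \<longleftrightarrow> T X = X" for X
  proof -
    have "M ** X ** N + mat_abs X = G \<longleftrightarrow> M ** X ** N = M ** T X ** N"
      unfolding T_def matrix_sandwich_inv_cancel[OF inv] by (auto simp: algebra_simps)
    then show ?thesis using matrix_sandwich_eq_iff[OF inv] by auto
  qed
  have "dist (T X) (T Y) \<le> (1 / s) * dist X Y" for X Y
  proof -
    define Z where "Z = T X - T Y"
    have "M ** Z ** N = mat_abs Y - mat_abs X"
      unfolding Z_def T_def matrix_diff_ldistrib matrix_diff_rdistrib matrix_sandwich_inv_cancel[OF inv]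
      by simp
    then have "s * norm Z \<le> norm (X - Y)"
      using sigma_min_mult_le_norm_matrix_sandwich[of M N Z] norm_mat_abs_diff_le[of Y X]
      by (simp add: s_def norm_minus_commute)
    then show ?thesis using assms by (simp add: Z_def dist_norm s_def field_simps)
  qed
  then have "\<exists>!X. T X = X"
    by (intro banach_fix_type[of "1 / s"]) (use assms s_def in auto)
  then show ?thesis by (simp add: fixpoint_iff)
qed

lemma sylvester_ave_iff_normalized:
  fixes A B K L F X :: "real^'n^'n"
  assumes "invertible B" "invertible L"
  shows "A ** X ** K + B ** mat_abs X ** L = F \<longleftrightarrow>
    (matrix_inv B ** A) ** X ** (K ** matrix_inv L) + mat_abs X = matrix_inv B ** F ** matrix_inv L"
proof -
  have "matrix_inv B ** (A ** X ** K + B ** mat_abs X ** L) ** matrix_inv L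
      = matrix_inv B ** (A ** X ** K) ** matrix_inv L + mat_abs X"
    by (simp add: matrix_add_ldistrib matrix_add_rdistrib matrix_inv_sandwich_cancel[OF assms])
  also have "matrix_inv B ** (A ** X ** K) ** matrix_inv L
      = (matrix_inv B ** A) ** X ** (K ** matrix_inv L)"
    by (simp add: matrix_mul_assoc)
  finally show ?thesis
    using matrix_sandwich_eq_iff[OF invertible_matrix_inv[OF assms(1)] invertible_matrix_inv[OF assms(2)]]
    by metis
qed

theorem theorem4p8:
  fixes A B K L F :: "real^'n^'n"
  assumes "invertible B" and "invertible L"
    and "sigma_min (K ** matrix_inv L) * sigma_min (matrix_inv B ** A) > 1"
  shows "\<exists>!X :: real^'n^'n. A ** X ** K + B ** mat_abs X ** L = F"
  using normalized_sylvester_ave_unique_solution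
      [of "matrix_inv B ** A" "K ** matrix_inv L" "matrix_inv B ** F ** matrix_inv L"] assms
  by (simp add: sylvester_ave_iff_normalized mult.commute)

end
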